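(* Let $n\ge 3$ and consider the Majority Model (MM) on the cycle $C_n$ with a coloring $\mathcal{C}$ in which there exist two adjacent nodes with the same color. Then, starting from $\mathcal{C}$, the process reaches a stable coloring after exactly $\lceil l/2\rceil$ rounds, where $l$ is the length of the longest alternating path in the path partition of $\mathcal{C}$.
   Context: A coloring of a graph is a map from its nodes to $\{b,w\}$ (blue/white). In the Majority Model (MM), all nodes update simultaneously in each round: a node adopts the color strictly more frequent among its neighbors in the previous round, and keeps its current color in case of a tie. A coloring is stable if one application of the update rule returns the same coloring. On a cycle, a path is monochromatic if all its nodes have the same color, and alternating if every two adjacent nodes on it have opposite colors; the length of a path is its number of nodes. Path partition: let $B$ (resp. $W$) be the set of nodes lying on maximal blue (resp. white) paths of length at least two in $\mathcal{C}$; the nodes not in $B\cup W$ are partitioned into maximal alternating paths (lying between such monochromatic paths). The path partition consists of these maximal monochromatic paths of length at least two and these maximal alternating paths (take $l=0$ if there are no alternating paths). *)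

theory Defs
  imports Complex_Main
begin

datatype color = Blue | White

text \<open>The cycle C_n has nodes 0..n-1; node i is adjacent to (i+1) mod n and (i+n-1) mod n.
  A coloring is a function nat => color; only its values on 0..n-1 matter.\<close>

definition cyc_nbrs :: "nat \<Rightarrow> nat \<Rightarrow> nat set" where
  "cyc_nbrs n i = {(i + 1) mod n, (i + n - 1) mod n}"

definition mm_step :: "nat \<Rightarrow> (nat \<Rightarrow> color) \<Rightarrow> (nat \<Rightarrow> color)" where
  "mm_step n c i =
     (let b = card {j \<in> cyc_nbrs n i. c j = Blue};
          w = card {j \<in> cyc_nbrs n i. c j = White}
      in if b > w then Blue else if w > b then White else c i)"

definition mm_stable :: "nat \<Rightarrow> (nat \<Rightarrow> color) \<Rightarrow> bool" where
  "mm_stable n c \<longleftrightarrow> (\<forall>i<n. mm_step n c i = c i)"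

text \<open>Node i lies on a maximal monochromatic path of length at least two (i.e. in B \<union> W)
  iff it has a neighbour of its own colour.\<close>
definition in_mono :: "nat \<Rightarrow> (nat \<Rightarrow> color) \<Rightarrow> nat \<Rightarrow> bool" where
  "in_mono n c i \<longleftrightarrow> (\<exists>j \<in> cyc_nbrs n i. c j = c i)"

definition max_alt_path :: "nat \<Rightarrow> (nat \<Rightarrow> color) \<Rightarrow> nat \<Rightarrow> nat \<Rightarrow> bool" where
  "max_alt_path n c i k \<longleftrightarrow> i < n \<and> 1 \<le> k \<and> k < n \<and>
     (\<forall>j<k. \<not> in_mono n c ((i + j) mod n)) \<and>
     in_mono n c ((i + n - 1) mod n) \<and> in_mono n c ((i + k) mod n)"

definition longest_alt :: "nat \<Rightarrow> (nat \<Rightarrow> color) \<Rightarrow> nat" where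
  "longest_alt n c = Max ({0} \<union> {k. \<exists>i. max_alt_path n c i k})"

end

(* A node lies on a monochromatic path iff it has a neighbour of its own colour; such a node
   never changes colour, so it stays on one. An alternating node adopts the common colour of its
   two neighbours, so it joins a monochromatic path exactly when one of its neighbours lies on
   one. Hence node x is still alternating after t rounds iff all 2t + 1 nodes from x - t to x + t
   were alternating at the start, and a coloring is stable iff it has no alternating node.
   Because some node lies on a monochromatic path, the maximal runs of alternating nodes are
   exactly the alternating paths of the path partition. So the process is stable after t rounds
   iff l < 2t + 1, i.e. iff t >= ceil(l/2). *)

theory Submission
  imports Defs
begin

lemma mod_add_pred_eq:
  "0 < (n::nat) \<Longrightarrow> (x mod n + n - 1) mod n = (x + n - 1) mod n"
  by (metis Nat.add_diff_assoc One_nat_def Suc_leI mod_add_left_eq)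

lemma cyc_nbrs_mod:
  assumes "0 < n"
  shows "cyc_nbrs n (x mod n) = {(x + 1) mod n, (x + n - 1) mod n}"
  unfolding cyc_nbrs_def mod_add_pred_eq[OF assms] mod_add_left_eq ..

lemma cyc_succ_ne_pred:
  fixes n x :: nat
  assumes "3 \<le> n"
  shows "(x + 1) mod n \<noteq> (x + n - 1) mod n"
proof -
  define i where "i = x mod n"
  have "i < n" unfolding i_def using assms by simp
  have "(i + 1) mod n \<noteq> (i + n - 1) mod n"
  proof (cases "i = 0")
    case True
    then show ?thesis using assms by simp
  next
    case False
    then have "i + n - 1 = (i - 1) + n" by simp
    then have "(i + n - 1) mod n = i - 1"
      using \<open>i < n\<close> by (metis less_imp_diff_less mod_add_self2 mod_less)
    moreover have "(i + 1) mod n \<noteq> i - 1"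
      using \<open>i < n\<close> False assms by (cases "i + 1 = n") auto
    ultimately show ?thesis by simp
  qed
  moreover have "0 < n" using assms by simp
  ultimately show ?thesis unfolding i_def mod_add_left_eq by (metis mod_add_pred_eq)
qed

lemma card_filter_doubleton:
  assumes "a \<noteq> b"
  shows "card {j \<in> {a, b}. P j} = of_bool (P a) + of_bool (P b)"
proof -
  have "{j \<in> {a, b}. P j} = (if P a then {a} else {}) \<union> (if P b then {b} else {})" by auto
  then show ?thesis using assms by simp
qed

lemma mm_step_mod:
  assumes "3 \<le> n"
  shows "mm_step n c (x mod n) =
    (if c ((x + 1) mod n) = c ((x + n - 1) mod n) then c ((x + 1) mod n) else c (x mod n))"
proof -
  have n0: "0 < n" using assms by simp
  define a b where "a = (x + 1) mod n" and "b = (x + n - 1) mod n"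
  have "a \<noteq> b" unfolding a_def b_def using cyc_succ_ne_pred[OF assms] .
  then show ?thesis
    unfolding mm_step_def cyc_nbrs_mod[OF n0] a_def[symmetric] b_def[symmetric] Let_def
      card_filter_doubleton[OF \<open>a \<noteq> b\<close>]
    by (cases "c a"; cases "c b"; simp)
qed

lemma in_mono_mod:
  assumes "0 < n"
  shows "in_mono n c (x mod n) \<longleftrightarrow>
    c ((x + 1) mod n) = c (x mod n) \<or> c ((x + n - 1) mod n) = c (x mod n)"
  unfolding in_mono_def cyc_nbrs_mod[OF assms] by auto

lemma mm_stable_iff_in_mono:
  assumes "3 \<le> n"
  shows "mm_stable n c \<longleftrightarrow> (\<forall>i<n. in_mono n c i)"
proof -
  have n0: "0 < n" using assms by simp
  have "mm_step n c i = c i \<longleftrightarrow> in_mono n c i" if "i < n" for i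
    using mm_step_mod[OF assms, of c i] in_mono_mod[OF n0, of c i] that
    by (cases "c i"; cases "c ((i + 1) mod n)"; cases "c ((i + n - 1) mod n)"; simp)
  then show ?thesis unfolding mm_stable_def by simp
qed

text \<open>Node indices are arbitrary naturals read modulo \<open>n\<close>, so that a run of consecutive
  nodes \<open>{x..<x + k}\<close> may wrap around the cycle.\<close>
definition alternating_at :: "nat \<Rightarrow> (nat \<Rightarrow> color) \<Rightarrow> nat \<Rightarrow> bool" where
  "alternating_at n c x \<longleftrightarrow> \<not> in_mono n c (x mod n)"

lemma alternating_at_add_period [simp]: "alternating_at n c (x + n) = alternating_at n c x"
  unfolding alternating_at_def by simp

lemma alternating_at_mod [simp]: "alternating_at n c (x mod n) = alternating_at n c x"
  unfolding alternating_at_def by simp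

lemma alternating_at_mm_step:
  assumes "3 \<le> n"
  shows "alternating_at n (mm_step n c) x \<longleftrightarrow>
    alternating_at n c (x + n - 1) \<and> alternating_at n c x \<and> alternating_at n c (x + 1)"
proof -
  have n0: "0 < n" using assms by simp
  have shifts: "(x + 1 + n - 1) mod n = x mod n" "(x + n - 1 + 1) mod n = x mod n"
    "(x + 1 + 1) mod n = (x + 2) mod n"
    using n0 by simp_all
  define A B C D E where "A = c ((x + n - 1 + n - 1) mod n)" and "B = c ((x + n - 1) mod n)"
    and "C = c (x mod n)" and "D = c ((x + 1) mod n)" and "E = c ((x + 2) mod n)"
  show ?thesis
    unfolding alternating_at_def in_mono_mod[OF n0, of "mm_step n c"]
      in_mono_mod[OF n0, of c x] in_mono_mod[OF n0, of c "x + 1"] in_mono_mod[OF n0, of c "x + n - 1"]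
      mm_step_mod[OF assms, of c x] mm_step_mod[OF assms, of c "x + 1"]
      mm_step_mod[OF assms, of c "x + n - 1"] shifts
      A_def[symmetric] B_def[symmetric] C_def[symmetric] D_def[symmetric] E_def[symmetric]
    by (cases A; cases B; cases C; cases D; cases E; simp)
qed

lemma alternating_at_funpow_mm_step:
  assumes "3 \<le> n"
  shows "alternating_at n ((mm_step n ^^ t) c) (x + t) \<longleftrightarrow>
    (\<forall>y\<in>{x..x + 2 * t}. alternating_at n c y)"
proof (induction t arbitrary: x)
  case 0
  then show ?case by simp
next
  case (Suc t)
  have "alternating_at n ((mm_step n ^^ Suc t) c) (x + Suc t) \<longleftrightarrow>
      alternating_at n ((mm_step n ^^ t) c) (x + t) \<and>
      alternating_at n ((mm_step n ^^ t) c) (x + 1 + t) \<and>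
      alternating_at n ((mm_step n ^^ t) c) (x + 2 + t)"
    using alternating_at_mm_step[OF assms, of "(mm_step n ^^ t) c" "x + Suc t"]
      alternating_at_add_period[of n "(mm_step n ^^ t) c" "x + t"]
    by (simp add: ac_simps)
  also have "\<dots> \<longleftrightarrow> (\<forall>y\<in>{x..x + 2 * t} \<union> {x + 1..x + 1 + 2 * t} \<union>
      {x + 2..x + 2 + 2 * t}. alternating_at n c y)"
    unfolding Suc.IH ball_Un by blast
  also have "{x..x + 2 * t} \<union> {x + 1..x + 1 + 2 * t} \<union> {x + 2..x + 2 + 2 * t} =
      {x..x + 2 * Suc t}"
    by auto
  finally show ?case .
qed

lemma mm_stable_funpow_iff:
  assumes "3 \<le> n"
  shows "mm_stable n ((mm_step n ^^ t) c) \<longleftrightarrow>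
    \<not> (\<exists>x. \<forall>y\<in>{x..x + 2 * t}. alternating_at n c y)"
proof -
  let ?c = "(mm_step n ^^ t) c"
  have n0: "0 < n" using assms by simp
  have "mm_stable n ?c \<longleftrightarrow> (\<forall>y. \<not> alternating_at n ?c y)"
    unfolding mm_stable_iff_in_mono[OF assms] alternating_at_def
    by (metis mod_less mod_less_divisor n0)
  also have "\<dots> \<longleftrightarrow> (\<forall>x. \<not> alternating_at n ?c (x + t))"
  proof
    assume "\<forall>x. \<not> alternating_at n ?c (x + t)"
    then have "\<not> alternating_at n ?c (y + t * n - t + t)" for y by blast
    moreover have "t \<le> t * n" using n0 by simp
    then have "y + t * n - t + t = y + t * n" for y by linarith
    ultimately show "\<forall>y. \<not> alternating_at n ?c y"
      by (metis alternating_at_mod mod_mult_self1)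
  qed blast
  also have "\<dots> \<longleftrightarrow> \<not> (\<exists>x. \<forall>y\<in>{x..x + 2 * t}. alternating_at n c y)"
    unfolding alternating_at_funpow_mm_step[OF assms] by blast
  finally show ?thesis .
qed

lemma not_all_alternating_at:
  assumes "i < n" "in_mono n c i"
  shows "\<not> (\<forall>y\<in>{x..<x + n}. alternating_at n c y)"
proof -
  define j where "j = (i + n - x mod n) mod n"
  have "j < n" unfolding j_def using assms(1) by simp
  have "(x + j) mod n = (x mod n + (i + n - x mod n)) mod n"
    unfolding j_def by (metis mod_add_left_eq mod_add_right_eq)
  also have "x mod n + (i + n - x mod n) = i + n"
    using mod_less_divisor[of n x] assms(1) by linarith
  finally have "(x + j) mod n = i" using assms(1) by simp
  then have "\<not> alternating_at n c (x + j)"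
    unfolding alternating_at_def using assms(2) by simp
  moreover have "x + j \<in> {x..<x + n}" using \<open>j < n\<close> by simp
  ultimately show ?thesis by blast
qed

lemma max_alt_path_if_maximal_run:
  assumes "1 \<le> k" "k < n"
    and run: "\<forall>y\<in>{x..<x + k}. alternating_at n c y"
    and maximal: "\<And>z. \<not> (\<forall>y\<in>{z..<z + Suc k}. alternating_at n c y)"
  shows "max_alt_path n c (x mod n) k"
  unfolding max_alt_path_def
proof (intro conjI allI impI)
  have n0: "0 < n" using assms(2) by simp
  then show "x mod n < n" by simp
  show "1 \<le> k" "k < n" by fact+
  show "\<not> in_mono n c ((x mod n + j) mod n)" if "j < k" for j
    using run that unfolding alternating_at_def by (simp add: mod_add_left_eq)
  show "in_mono n c ((x mod n + n - 1) mod n)"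
  proof (rule ccontr)
    assume "\<not> in_mono n c ((x mod n + n - 1) mod n)"
    then have "alternating_at n c (x + n - 1)"
      unfolding alternating_at_def mod_add_pred_eq[OF n0] .
    moreover have "alternating_at n c y" if "y \<in> {x + n..<x + n + k}" for y
    proof -
      have "y - n \<in> {x..<x + k}" using that by auto
      with run have "alternating_at n c (y - n + n)" by simp
      with that show ?thesis by simp
    qed
    moreover have "{x + n - 1..<x + n - 1 + Suc k} = insert (x + n - 1) {x + n..<x + n + k}"
      using n0 by auto
    ultimately have "\<forall>y\<in>{x + n - 1..<x + n - 1 + Suc k}. alternating_at n c y"
      by simp
    with maximal show False by blast
  qed
  show "in_mono n c ((x mod n + k) mod n)"
  proof (rule ccontr)
    assume "\<not> in_mono n c ((x mod n + k) mod n)"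
    then have "alternating_at n c (x + k)"
      unfolding alternating_at_def by (simp add: mod_add_left_eq)
    with run have "\<forall>y\<in>{x..<x + Suc k}. alternating_at n c y"
      by (auto simp: less_Suc_eq)
    with maximal show False by blast
  qed
qed

lemma finite_max_alt_path_lengths: "finite {k. \<exists>i. max_alt_path n c i k}"
  by (rule finite_subset[of _ "{..<n}"]) (auto simp: max_alt_path_def)

lemma alternating_run_le_longest_alt:
  assumes "i < n" "in_mono n c i" "1 \<le> m"
    and "\<forall>y\<in>{x..<x + m}. alternating_at n c y"
  shows "m \<le> longest_alt n c"
proof -
  define run where "run k \<longleftrightarrow> (\<exists>z. \<forall>y\<in>{z..<z + k}. alternating_at n c y)" for k
  have bounded: "k < n" if "run k" for k
  proof (rule ccontr)
    assume "\<not> k < n"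
    with that obtain z where "\<forall>y\<in>{z..<z + n}. alternating_at n c y"
      unfolding run_def by fastforce
    with not_all_alternating_at[OF assms(1,2)] show False by blast
  qed
  moreover have "run m" unfolding run_def using assms(4) by blast
  ultimately obtain k where "run k" and greatest: "\<And>k'. run k' \<Longrightarrow> k' \<le> k"
    using Nat.ex_has_greatest_nat[of run m n] by (metis less_imp_le)
  then obtain z where z: "\<forall>y\<in>{z..<z + k}. alternating_at n c y" unfolding run_def by blast
  have "m \<le> k" using greatest \<open>run m\<close> by blast
  have "\<not> (\<forall>y\<in>{z'..<z' + Suc k}. alternating_at n c y)" for z'
    using greatest[of "Suc k"] unfolding run_def by auto
  moreover have "1 \<le> k" using \<open>m \<le> k\<close> assms(3) by simp
  ultimately have "max_alt_path n c (z mod n) k"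
    using max_alt_path_if_maximal_run bounded[OF \<open>run k\<close>] z by blast
  then have "k \<le> longest_alt n c"
    unfolding longest_alt_def using finite_max_alt_path_lengths by (intro Max_ge) auto
  with \<open>m \<le> k\<close> show ?thesis by simp
qed

lemma longest_alt_run: "\<exists>x. \<forall>y\<in>{x..<x + longest_alt n c}. alternating_at n c y"
proof (cases "longest_alt n c = 0")
  case False
  have "longest_alt n c \<in> {0} \<union> {k. \<exists>i. max_alt_path n c i k}"
    unfolding longest_alt_def using finite_max_alt_path_lengths by (intro Max_in) auto
  with False obtain i where "max_alt_path n c i (longest_alt n c)" by auto
  then have "\<forall>y\<in>{i..<i + longest_alt n c}. alternating_at n c y"
    unfolding max_alt_path_def alternating_at_def
    by (metis atLeastLessThan_iff le_add_diff_inverse nat_add_left_cancel_less)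
  then show ?thesis by blast
qed simp

lemma mm_stable_funpow_iff_longest_alt:
  assumes "3 \<le> n" "i < n" "in_mono n c i"
  shows "mm_stable n ((mm_step n ^^ t) c) \<longleftrightarrow> longest_alt n c \<le> 2 * t"
proof -
  have window: "{x..x + 2 * t} = {x..<x + (2 * t + 1)}" for x by auto
  have "(\<exists>x. \<forall>y\<in>{x..<x + (2 * t + 1)}. alternating_at n c y) \<longleftrightarrow>
      2 * t + 1 \<le> longest_alt n c"
  proof
    assume "\<exists>x. \<forall>y\<in>{x..<x + (2 * t + 1)}. alternating_at n c y"
    then obtain x where "\<forall>y\<in>{x..<x + (2 * t + 1)}. alternating_at n c y" ..
    then show "2 * t + 1 \<le> longest_alt n c"
      by (rule alternating_run_le_longest_alt[OF assms(2,3), rotated]) simp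
  next
    assume "2 * t + 1 \<le> longest_alt n c"
    then show "\<exists>x. \<forall>y\<in>{x..<x + (2 * t + 1)}. alternating_at n c y"
      using longest_alt_run[of n c] by fastforce
  qed
  then show ?thesis unfolding mm_stable_funpow_iff[OF assms(1)] window by auto
qed

lemma nat_ceiling_half: "nat \<lceil>real m / 2\<rceil> = (m + 1) div 2"
proof -
  have "\<lceil>real m / 2\<rceil> = int ((m + 1) div 2)"
    by (rule ceiling_unique) linarith+
  then show ?thesis by simp
qed

theorem lemma2p2:
  fixes n :: nat and c :: "nat \<Rightarrow> color"
  assumes "n \<ge> 3"
    and "\<exists>i<n. c i = c ((i + 1) mod n)"
  shows "mm_stable n ((mm_step n ^^ nat \<lceil>real (longest_alt n c) / 2\<rceil>) c) \<and>
         (\<forall>t < nat \<lceil>real (longest_alt n c) / 2\<rceil>. \<not> mm_stable n ((mm_step n ^^ t) c))"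
proof -
  obtain i where "i < n" "c i = c ((i + 1) mod n)" using assms(2) by blast
  then have "in_mono n c i" unfolding in_mono_def cyc_nbrs_def by auto
  note stable_iff = mm_stable_funpow_iff_longest_alt[OF assms(1) \<open>i < n\<close> this]
  show ?thesis unfolding nat_ceiling_half stable_iff by auto
qed

end
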